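(* Let $R$ be a commutative Noetherian ring of prime characteristic $p$, let $(H^{(\lambda)})_{\lambda\in\Lambda}$ be a non-empty family of $\mathbb{Z}$-graded left $R[x,f]$-modules, and let $H:=\prod'_{\lambda\in\Lambda}H^{(\lambda)}$. Then: (i) $\mathcal{G}(H)=\left\{\bigcap_{\lambda\in\Lambda}\mathfrak{B}_\lambda : \mathfrak{B}_\lambda\in\mathcal{G}(H^{(\lambda)})\text{ for all }\lambda\in\Lambda\right\}$; (ii) consequently, if there is a set $\mathcal{G}'$ of graded two-sided ideals of $R[x,f]$ with $\mathcal{G}(H^{(\lambda)})=\mathcal{G}'$ for all $\lambda\in\Lambda$, then $\mathcal{G}(H)=\mathcal{G}'$; (iii) $\operatorname{HSL}(H)=\sup\{\operatorname{HSL}(H^{(\lambda)}):\lambda\in\Lambda\}$ (even if some $\operatorname{HSL}(H^{(\mu)})=\infty$); thus $H$ is $x$-torsion-free if and only if every $H^{(\lambda)}$ is $x$-torsion-free; (iv) if $\operatorname{HSL}(H)$ is finite, then $\Gamma_x(H)=\prod'_{\lambda\in\Lambda}\Gamma_x(H^{(\lambda)})$ and there is a homogeneous isomorphism of graded left $R[x,f]$-modules $H/\Gamma_x(H)\cong\prod'_{\lambda\in\Lambda}H^{(\lambda)}/\Gamma_x(H^{(\lambda)})$.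
   Context: $R[x,f]$ denotes the Frobenius skew polynomial ring over $R$: as a left $R$-module it is free on $(x^i)_{i\in\mathbb{N}_0}$, with multiplication subject to $xr = r^px$; it is graded with $n$th component $Rx^n$. For $\mathbb{Z}$-graded left $R[x,f]$-modules $H^{(\lambda)}=\bigoplus_n H^{(\lambda)}_n$, $\prod'_{\lambda}H^{(\lambda)}$ denotes the graded left $R[x,f]$-module $\bigoplus_{n\in\mathbb{Z}}\prod_{\lambda}H^{(\lambda)}_n$ with $x$ acting componentwise, $x(h_n^{(\lambda)})_\lambda=(xh_n^{(\lambda)})_\lambda$ (the product in the category of graded left $R[x,f]$-modules and degree-$0$ homogeneous homomorphisms). For a left $R[x,f]$-module $M$: $\operatorname{grann}_{R[x,f]}M$ is the largest graded two-sided ideal of $R[x,f]$ annihilating $M$; $\mathcal{G}(M)$ is the set of graded annihilators of all $R[x,f]$-submodules of $M$; $\Gamma_x(M)=\{m\in M: x^jm=0\text{ for some }j\in\mathbb{N}\}$ is the $x$-torsion submodule, and $M$ is $x$-torsion-free if $\Gamma_x(M)=0$; $\operatorname{HSL}(M)$ is the least $e\in\mathbb{N}_0$ with $x^e\Gamma_x(M)=0$, and $\operatorname{HSL}(M)=\infty$ if no such $e$ exists. *)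

theory Defs
  imports Main "HOL-Library.Extended_Nat" "HOL-Computational_Algebra.Polynomial"
begin

definition ring_ideal :: "'r::comm_ring_1 set \<Rightarrow> bool" where
  "ring_ideal I \<longleftrightarrow> 0 \<in> I \<and> (\<forall>a\<in>I. \<forall>b\<in>I. a + b \<in> I) \<and> (\<forall>r. \<forall>a\<in>I. r * a \<in> I)"

definition noetherian :: "'r::comm_ring_1 itself \<Rightarrow> bool" where
  "noetherian _ \<longleftrightarrow> (\<forall>I::'r set. ring_ideal I \<longrightarrow>
      (\<exists>F. finite F \<and> F \<subseteq> I \<and> I = {\<Sum>a\<in>F. c a * a | c. True}))"

text \<open>Elements of R[x,f] are represented by polynomials sum r_i x^i (left R-basis x^i);
  the multiplication obeys x r = r^p x.\<close>

definition skmul :: "nat \<Rightarrow> 'r::comm_ring_1 poly \<Rightarrow> 'r poly \<Rightarrow> 'r poly" where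
  "skmul p a b = Poly (map (\<lambda>n. \<Sum>i\<le>n. coeff a i * coeff b (n - i) ^ (p ^ i))
                          [0..<degree a + degree b + 1])"

definition graded_ideal :: "nat \<Rightarrow> 'r::comm_ring_1 poly set \<Rightarrow> bool" where
  "graded_ideal p I \<longleftrightarrow> 0 \<in> I \<and> (\<forall>a\<in>I. \<forall>b\<in>I. a + b \<in> I) \<and> (\<forall>a\<in>I. - a \<in> I)
     \<and> (\<forall>a\<in>I. \<forall>t. skmul p t a \<in> I \<and> skmul p a t \<in> I)
     \<and> (\<forall>a\<in>I. \<forall>n. monom (coeff a n) n \<in> I)"

text \<open>A Z-graded left R[x,f]-module is given by its homogeneous components H_n (carrier
  sets with their own R-module operations) and the action of x, H_n -> H_(n+1).\<close>

record ('r, 'm) gmod =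
  gcomp :: "int \<Rightarrow> 'm set"
  gzero :: "int \<Rightarrow> 'm"
  gadd  :: "int \<Rightarrow> 'm \<Rightarrow> 'm \<Rightarrow> 'm"
  gneg  :: "int \<Rightarrow> 'm \<Rightarrow> 'm"
  gsmult :: "int \<Rightarrow> 'r \<Rightarrow> 'm \<Rightarrow> 'm"
  gx    :: "int \<Rightarrow> 'm \<Rightarrow> 'm"

definition is_gmod :: "nat \<Rightarrow> ('r::comm_ring_1, 'm) gmod \<Rightarrow> bool" where
  "is_gmod p M \<longleftrightarrow> (\<forall>n. let C = gcomp M n; z = gzero M n; ad = gadd M n; ng = gneg M n;
        sm = gsmult M n in
      z \<in> C \<and> (\<forall>a\<in>C. \<forall>b\<in>C. ad a b \<in> C) \<and> (\<forall>a\<in>C. ng a \<in> C)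
      \<and> (\<forall>r. \<forall>a\<in>C. sm r a \<in> C) \<and> (\<forall>a\<in>C. gx M n a \<in> gcomp M (n + 1))
      \<and> (\<forall>a\<in>C. \<forall>b\<in>C. \<forall>c\<in>C. ad (ad a b) c = ad a (ad b c))
      \<and> (\<forall>a\<in>C. \<forall>b\<in>C. ad a b = ad b a)
      \<and> (\<forall>a\<in>C. ad z a = a) \<and> (\<forall>a\<in>C. ad (ng a) a = z)
      \<and> (\<forall>r. \<forall>a\<in>C. \<forall>b\<in>C. sm r (ad a b) = ad (sm r a) (sm r b))
      \<and> (\<forall>r s. \<forall>a\<in>C. sm (r + s) a = ad (sm r a) (sm s a))
      \<and> (\<forall>r s. \<forall>a\<in>C. sm (r * s) a = sm r (sm s a))
      \<and> (\<forall>a\<in>C. sm 1 a = a)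
      \<and> (\<forall>a\<in>C. \<forall>b\<in>C. gx M n (ad a b) = gadd M (n + 1) (gx M n a) (gx M n b))
      \<and> (\<forall>r. \<forall>a\<in>C. gx M n (sm r a) = gsmult M (n + 1) (r ^ p) (gx M n a)))"

subsection \<open>The underlying module H = direct sum of the H_n\<close>

definition elems :: "('r, 'm) gmod \<Rightarrow> (int \<Rightarrow> 'm) set" where
  "elems M = {h. (\<forall>n. h n \<in> gcomp M n) \<and> finite {n. h n \<noteq> gzero M n}}"

definition fzero :: "('r, 'm) gmod \<Rightarrow> int \<Rightarrow> 'm" where
  "fzero M = gzero M"

definition fadd :: "('r, 'm) gmod \<Rightarrow> (int \<Rightarrow> 'm) \<Rightarrow> (int \<Rightarrow> 'm) \<Rightarrow> int \<Rightarrow> 'm" where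
  "fadd M h k = (\<lambda>n. gadd M n (h n) (k n))"

definition fsm :: "('r, 'm) gmod \<Rightarrow> 'r \<Rightarrow> (int \<Rightarrow> 'm) \<Rightarrow> int \<Rightarrow> 'm" where
  "fsm M r h = (\<lambda>n. gsmult M n r (h n))"

definition fx :: "('r, 'm) gmod \<Rightarrow> (int \<Rightarrow> 'm) \<Rightarrow> int \<Rightarrow> 'm" where
  "fx M h = (\<lambda>n. gx M (n - 1) (h (n - 1)))"

primrec fsum :: "('r, 'm) gmod \<Rightarrow> (nat \<Rightarrow> int \<Rightarrow> 'm) \<Rightarrow> nat \<Rightarrow> int \<Rightarrow> 'm" where
  "fsum M f 0 = fzero M"
| "fsum M f (Suc k) = fadd M (fsum M f k) (f k)"

definition act :: "('r::comm_ring_1, 'm) gmod \<Rightarrow> 'r poly \<Rightarrow> (int \<Rightarrow> 'm) \<Rightarrow> int \<Rightarrow> 'm" where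
  "act M t h = fsum M (\<lambda>i. fsm M (coeff t i) ((fx M ^^ i) h)) (Suc (degree t))"

definition submod :: "('r::comm_ring_1, 'm) gmod \<Rightarrow> (int \<Rightarrow> 'm) set \<Rightarrow> bool" where
  "submod M N \<longleftrightarrow> N \<subseteq> elems M \<and> fzero M \<in> N \<and> (\<forall>h\<in>N. \<forall>k\<in>N. fadd M h k \<in> N)
      \<and> (\<forall>t. \<forall>h\<in>N. act M t h \<in> N)"

definition grann :: "nat \<Rightarrow> ('r::comm_ring_1, 'm) gmod \<Rightarrow> (int \<Rightarrow> 'm) set \<Rightarrow> 'r poly set" where
  "grann p M N = (GREATEST I. graded_ideal p I \<and> (\<forall>t\<in>I. \<forall>h\<in>N. act M t h = fzero M))"

definition Gset :: "nat \<Rightarrow> ('r::comm_ring_1, 'm) gmod \<Rightarrow> 'r poly set set" where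
  "Gset p M = {grann p M N | N. submod M N}"

definition Gamma :: "('r, 'm) gmod \<Rightarrow> (int \<Rightarrow> 'm) set" where
  "Gamma M = {h \<in> elems M. \<exists>j\<ge>1. (fx M ^^ j) h = fzero M}"

definition x_torsion_free :: "('r, 'm) gmod \<Rightarrow> bool" where
  "x_torsion_free M \<longleftrightarrow> Gamma M = {fzero M}"

definition HSL :: "('r, 'm) gmod \<Rightarrow> enat" where
  "HSL M = (if \<exists>e. \<forall>h\<in>Gamma M. (fx M ^^ e) h = fzero M
            then enat (LEAST e. \<forall>h\<in>Gamma M. (fx M ^^ e) h = fzero M) else \<infinity>)"

text \<open>Product prod' over the index type 'l: n-th component is the product of the n-th
  components, x acting componentwise.\<close>
definition gprod :: "('l \<Rightarrow> ('r, 'm) gmod) \<Rightarrow> ('r, 'l \<Rightarrow> 'm) gmod" where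
  "gprod H = \<lparr> gcomp = (\<lambda>n. {v. \<forall>l. v l \<in> gcomp (H l) n}),
               gzero = (\<lambda>n l. gzero (H l) n),
               gadd = (\<lambda>n v w l. gadd (H l) n (v l) (w l)),
               gneg = (\<lambda>n v l. gneg (H l) n (v l)),
               gsmult = (\<lambda>n r v l. gsmult (H l) n r (v l)),
               gx = (\<lambda>n v l. gx (H l) n (v l)) \<rparr>"

definition hom_part :: "('r, 'm) gmod \<Rightarrow> (int \<Rightarrow> 'm) set \<Rightarrow> int \<Rightarrow> 'm set" where
  "hom_part M S n = {m \<in> gcomp M n. (\<lambda>k. if k = n then m else gzero M k) \<in> S}"

definition gsub :: "('r, 'm) gmod \<Rightarrow> (int \<Rightarrow> 'm) set \<Rightarrow> ('r, 'm) gmod" where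
  "gsub M S = M \<lparr> gcomp := hom_part M S \<rparr>"

definition coset :: "('r, 'm) gmod \<Rightarrow> (int \<Rightarrow> 'm) set \<Rightarrow> int \<Rightarrow> 'm \<Rightarrow> 'm set" where
  "coset M S n m = {gadd M n m s | s. s \<in> hom_part M S n}"

text \<open>Quotient of M by a graded submodule S; elements of degree n are cosets m + S_n.\<close>
definition gquot :: "('r, 'm) gmod \<Rightarrow> (int \<Rightarrow> 'm) set \<Rightarrow> ('r, 'm set) gmod" where
  "gquot M S = \<lparr> gcomp = (\<lambda>n. coset M S n ` gcomp M n),
               gzero = (\<lambda>n. hom_part M S n),
               gadd = (\<lambda>n A B. {gadd M n a b | a b. a \<in> A \<and> b \<in> B}),
               gneg = (\<lambda>n A. gneg M n ` A),
               gsmult = (\<lambda>n r A. {gadd M n (gsmult M n r a) s | a s. a \<in> A \<and> s \<in> hom_part M S n}),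
               gx = (\<lambda>n A. {gadd M (n + 1) (gx M n a) s | a s. a \<in> A \<and> s \<in> hom_part M S (n + 1)}) \<rparr>"

definition giso :: "('r, 'a) gmod \<Rightarrow> ('r, 'b) gmod \<Rightarrow> (int \<Rightarrow> 'a \<Rightarrow> 'b) \<Rightarrow> bool" where
  "giso M N \<phi> \<longleftrightarrow> (\<forall>n. bij_betw (\<phi> n) (gcomp M n) (gcomp N n)
      \<and> (\<forall>a\<in>gcomp M n. \<forall>b\<in>gcomp M n. \<phi> n (gadd M n a b) = gadd N n (\<phi> n a) (\<phi> n b))
      \<and> (\<forall>r. \<forall>a\<in>gcomp M n. \<phi> n (gsmult M n r a) = gsmult N n r (\<phi> n a))
      \<and> (\<forall>a\<in>gcomp M n. \<phi> (n + 1) (gx M n a) = gx N n (\<phi> n a)))"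

end

theory Submission
  imports Defs "HOL-Computational_Algebra.Primes"
begin

text \<open>Everything in the product is computed coordinatewise. The graded annihilator of a submodule
  \<open>N\<close> of \<open>H\<close> is the intersection of the graded annihilators of its coordinate projections
  \<open>N\<^sub>\<lambda>\<close>, and every family of submodules \<open>N\<^sub>\<lambda>\<close> of the factors arises this way, from the
  submodule of all elements whose coordinates lie in the \<open>N\<^sub>\<lambda>\<close>; this gives (i). For (ii), each
  \<open>\<G>(M)\<close> is closed under arbitrary intersections, the annihilator of a sum of submodules being the
  intersection of their annihilators.

  A power \<open>x\<^sup>e\<close> kills \<open>\<Gamma>\<^sub>x(H)\<close> iff it kills every \<open>\<Gamma>\<^sub>x(H\<^sub>\<lambda>)\<close>, since coordinates of torsion
  elements are torsion and torsion elements of a factor embed into \<open>H\<close>; this gives (iii). When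
  \<open>x\<^sup>e\<close> kills \<open>\<Gamma>\<^sub>x(H)\<close>, an element is torsion iff \<open>x\<^sup>e\<^sup>+\<^sup>1\<close> kills each of its homogeneous
  components, a coordinatewise condition; so \<open>\<Gamma>\<^sub>x(H)\<close> is the product of the \<open>\<Gamma>\<^sub>x(H\<^sub>\<lambda>)\<close>, and sending a
  coset to the family of its coordinate cosets is the isomorphism of (iv).\<close>

section \<open>Graded modules\<close>

definition comp_funs :: "('r, 'm) gmod \<Rightarrow> (int \<Rightarrow> 'm) set" where
  "comp_funs M = {h. \<forall>n. h n \<in> gcomp M n}"

lemma elems_subset_comp_funs: "elems M \<subseteq> comp_funs M"
  by (auto simp: elems_def comp_funs_def)

locale graded_module =
  fixes p :: nat and M :: "('r::comm_ring_1, 'm) gmod"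
  assumes is_gmod: "is_gmod p M"
begin

lemma zero_in: "gzero M n \<in> gcomp M n"
  and add_in: "a \<in> gcomp M n \<Longrightarrow> b \<in> gcomp M n \<Longrightarrow> gadd M n a b \<in> gcomp M n"
  and neg_in: "a \<in> gcomp M n \<Longrightarrow> gneg M n a \<in> gcomp M n"
  and smult_in: "a \<in> gcomp M n \<Longrightarrow> gsmult M n r a \<in> gcomp M n"
  and x_in: "a \<in> gcomp M n \<Longrightarrow> gx M n a \<in> gcomp M (n + 1)"
  and add_assoc: "a \<in> gcomp M n \<Longrightarrow> b \<in> gcomp M n \<Longrightarrow> c \<in> gcomp M n \<Longrightarrow>
    gadd M n (gadd M n a b) c = gadd M n a (gadd M n b c)"
  and add_commute: "a \<in> gcomp M n \<Longrightarrow> b \<in> gcomp M n \<Longrightarrow> gadd M n a b = gadd M n b a"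
  and zero_add: "a \<in> gcomp M n \<Longrightarrow> gadd M n (gzero M n) a = a"
  and neg_add: "a \<in> gcomp M n \<Longrightarrow> gadd M n (gneg M n a) a = gzero M n"
  and smult_add: "a \<in> gcomp M n \<Longrightarrow> b \<in> gcomp M n \<Longrightarrow>
    gsmult M n r (gadd M n a b) = gadd M n (gsmult M n r a) (gsmult M n r b)"
  and add_smult: "a \<in> gcomp M n \<Longrightarrow> gsmult M n (r + s) a = gadd M n (gsmult M n r a) (gsmult M n s a)"
  and mult_smult: "a \<in> gcomp M n \<Longrightarrow> gsmult M n (r * s) a = gsmult M n r (gsmult M n s a)"
  and one_smult: "a \<in> gcomp M n \<Longrightarrow> gsmult M n 1 a = a"
  and x_add: "a \<in> gcomp M n \<Longrightarrow> b \<in> gcomp M n \<Longrightarrow>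
    gx M n (gadd M n a b) = gadd M (n + 1) (gx M n a) (gx M n b)"
  and x_smult: "a \<in> gcomp M n \<Longrightarrow> gx M n (gsmult M n r a) = gsmult M (n + 1) (r ^ p) (gx M n a)"
  using is_gmod[unfolded is_gmod_def Let_def, rule_format, of n] by meson+

lemma add_zero: "a \<in> gcomp M n \<Longrightarrow> gadd M n a (gzero M n) = a"
  using add_commute zero_add zero_in by metis

lemma idem_eq_zero:
  assumes "a \<in> gcomp M n" "gadd M n a a = a"
  shows "a = gzero M n"
proof -
  have "gzero M n = gadd M n (gneg M n a) (gadd M n a a)" using neg_add assms by simp
  also have "\<dots> = a" using add_assoc neg_add zero_add neg_in assms by metis
  finally show ?thesis by simp
qed

lemma x_zero: "gx M n (gzero M n) = gzero M (n + 1)"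
  using x_add[of "gzero M n" n "gzero M n"] by (metis idem_eq_zero x_in zero_add zero_in)

lemma smult_zero: "gsmult M n r (gzero M n) = gzero M n"
  using smult_add[of "gzero M n" n "gzero M n"] by (metis idem_eq_zero smult_in zero_add zero_in)

lemma zero_smult: "a \<in> gcomp M n \<Longrightarrow> gsmult M n 0 a = gzero M n"
  using add_smult[of a n 0 0] by (metis add_0 idem_eq_zero smult_in)

lemma add_swap:
  assumes "a \<in> gcomp M n" "b \<in> gcomp M n" "c \<in> gcomp M n" "d \<in> gcomp M n"
  shows "gadd M n (gadd M n a b) (gadd M n c d) = gadd M n (gadd M n a c) (gadd M n b d)"
  using assms by (metis add_assoc add_commute add_in)

lemma fzero_in: "fzero M \<in> comp_funs M"
  and fadd_in: "a \<in> comp_funs M \<Longrightarrow> b \<in> comp_funs M \<Longrightarrow> fadd M a b \<in> comp_funs M"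
  and fsm_in: "a \<in> comp_funs M \<Longrightarrow> fsm M r a \<in> comp_funs M"
  by (simp_all add: comp_funs_def fzero_def fadd_def fsm_def zero_in add_in smult_in)

lemma fx_in: "a \<in> comp_funs M \<Longrightarrow> fx M a \<in> comp_funs M"
  using x_in[of "a (n - 1)" "n - 1" for n] by (simp add: comp_funs_def fx_def)

lemma fxpow_in: "a \<in> comp_funs M \<Longrightarrow> (fx M ^^ i) a \<in> comp_funs M"
  by (induction i) (simp_all add: fx_in)

lemma fsum_in: "(\<And>i. i < k \<Longrightarrow> f i \<in> comp_funs M) \<Longrightarrow> fsum M f k \<in> comp_funs M"
  by (induction k) (simp_all add: fzero_in fadd_in)

lemma fadd_fzero: "a \<in> comp_funs M \<Longrightarrow> fadd M a (fzero M) = a"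
  and fzero_fadd_fzero: "fadd M (fzero M) (fzero M) = fzero M"
  and fadd_swap: "a \<in> comp_funs M \<Longrightarrow> b \<in> comp_funs M \<Longrightarrow> c \<in> comp_funs M \<Longrightarrow> d \<in> comp_funs M \<Longrightarrow>
    fadd M (fadd M a b) (fadd M c d) = fadd M (fadd M a c) (fadd M b d)"
  by (simp_all add: fadd_def fzero_def comp_funs_def add_zero zero_in add_swap)

lemma fsm_fzero: "fsm M r (fzero M) = fzero M"
  and zero_fsm: "a \<in> comp_funs M \<Longrightarrow> fsm M 0 a = fzero M"
  and fsm_fadd: "a \<in> comp_funs M \<Longrightarrow> b \<in> comp_funs M \<Longrightarrow>
    fsm M r (fadd M a b) = fadd M (fsm M r a) (fsm M r b)"
  and add_fsm: "a \<in> comp_funs M \<Longrightarrow> fsm M (r + s) a = fadd M (fsm M r a) (fsm M s a)"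
  by (simp_all add: fsm_def fadd_def fzero_def comp_funs_def smult_zero zero_smult smult_add add_smult)

lemma fx_fzero: "fx M (fzero M) = fzero M"
  using x_zero[of "n - 1" for n] by (simp add: fun_eq_iff fx_def fzero_def)

lemma fx_fadd: "a \<in> comp_funs M \<Longrightarrow> b \<in> comp_funs M \<Longrightarrow> fx M (fadd M a b) = fadd M (fx M a) (fx M b)"
  using x_add[of "a (n - 1)" "n - 1" "b (n - 1)" for n]
  by (simp add: fun_eq_iff fx_def fadd_def comp_funs_def)

lemma fxpow_fzero: "(fx M ^^ i) (fzero M) = fzero M"
  by (induction i) (simp_all add: fx_fzero)

lemma fxpow_fadd: "a \<in> comp_funs M \<Longrightarrow> b \<in> comp_funs M \<Longrightarrow>
    (fx M ^^ i) (fadd M a b) = fadd M ((fx M ^^ i) a) ((fx M ^^ i) b)"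
  by (induction i) (simp_all add: fx_fadd fxpow_in)

lemma fsum_fadd:
  "(\<And>i. i < k \<Longrightarrow> f i \<in> comp_funs M) \<Longrightarrow> (\<And>i. i < k \<Longrightarrow> g i \<in> comp_funs M) \<Longrightarrow>
    fsum M (\<lambda>i. fadd M (f i) (g i)) k = fadd M (fsum M f k) (fsum M g k)"
  by (induction k) (simp_all add: fzero_fadd_fzero fadd_swap fsum_in)

lemma fsum_fzero: "(\<And>i. i < k \<Longrightarrow> f i = fzero M) \<Longrightarrow> fsum M f k = fzero M"
  by (induction k) (simp_all add: fzero_fadd_fzero)

lemma fsum_extend:
  assumes "\<And>i. i < k \<Longrightarrow> f i \<in> comp_funs M" "\<And>i. i \<ge> k \<Longrightarrow> f i = fzero M" "k \<le> D"
  shows "fsum M f D = fsum M f k"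
  using assms(3) by (induction D) (auto simp: le_Suc_eq assms(1,2) fadd_fzero fsum_in)

lemma act_eq_fsum:
  assumes "h \<in> comp_funs M" "degree t < D"
  shows "act M t h = fsum M (\<lambda>i. fsm M (coeff t i) ((fx M ^^ i) h)) D"
  unfolding act_def
  by (rule fsum_extend[symmetric]) (use assms in \<open>auto simp: fsm_in fxpow_in coeff_eq_0 zero_fsm\<close>)

lemma act_add_left:
  assumes h: "h \<in> comp_funs M"
  shows "act M (a + b) h = fadd M (act M a h) (act M b h)"
proof -
  define D where "D = Suc (max (degree a) (degree b))"
  have "degree (a + b) < D" using degree_add_le_max[of a b] by (simp add: D_def)
  then have "act M (a + b) h = fsum M (\<lambda>i. fsm M (coeff (a + b) i) ((fx M ^^ i) h)) D"
    by (rule act_eq_fsum[OF h])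
  also have "\<dots> = fadd M (fsum M (\<lambda>i. fsm M (coeff a i) ((fx M ^^ i) h)) D)
                         (fsum M (\<lambda>i. fsm M (coeff b i) ((fx M ^^ i) h)) D)"
    using h by (simp add: add_fsm fxpow_in fsum_fadd fsm_in)
  also have "\<dots> = fadd M (act M a h) (act M b h)"
    using act_eq_fsum[OF h, of a D] act_eq_fsum[OF h, of b D] by (simp add: D_def)
  finally show ?thesis .
qed

lemma act_zero_left: "h \<in> comp_funs M \<Longrightarrow> act M 0 h = fzero M"
  by (simp add: act_def zero_fsm fzero_fadd_fzero)

lemma act_fadd:
  assumes "h \<in> comp_funs M" "k \<in> comp_funs M"
  shows "act M t (fadd M h k) = fadd M (act M t h) (act M t k)"
proof -
  have "fsm M (coeff t i) ((fx M ^^ i) (fadd M h k)) =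
      fadd M (fsm M (coeff t i) ((fx M ^^ i) h)) (fsm M (coeff t i) ((fx M ^^ i) k))" for i
    using assms by (simp add: fxpow_fadd fsm_fadd fxpow_in)
  then show ?thesis
    unfolding act_def by (simp only:) (rule fsum_fadd; use assms in \<open>simp add: fsm_in fxpow_in\<close>)
qed

lemma act_fzero: "act M t (fzero M) = fzero M"
  unfolding act_def by (rule fsum_fzero) (simp add: fxpow_fzero fsm_fzero)

lemma fzero_elems: "fzero M \<in> elems M"
  by (simp add: elems_def fzero_def zero_in)

lemma fadd_elems:
  assumes "a \<in> elems M" "b \<in> elems M"
  shows "fadd M a b \<in> elems M"
proof -
  have "{n. fadd M a b n \<noteq> gzero M n} \<subseteq> {n. a n \<noteq> gzero M n} \<union> {n. b n \<noteq> gzero M n}"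
    by (auto simp: fadd_def add_zero zero_in)
  then show ?thesis
    using assms fadd_in[of a b] elems_subset_comp_funs
    by (auto simp: elems_def comp_funs_def intro: finite_subset)
qed

lemma fsm_elems:
  assumes "a \<in> elems M"
  shows "fsm M r a \<in> elems M"
proof -
  have "{n. fsm M r a n \<noteq> gzero M n} \<subseteq> {n. a n \<noteq> gzero M n}"
    by (auto simp: fsm_def smult_zero)
  then show ?thesis
    using assms by (auto simp: elems_def fsm_def smult_in intro: finite_subset)
qed

lemma fx_elems:
  assumes "a \<in> elems M"
  shows "fx M a \<in> elems M"
proof -
  have "{n. fx M a n \<noteq> gzero M n} \<subseteq> (\<lambda>n. n + 1) ` {n. a n \<noteq> gzero M n}"
  proof
    fix n assume "n \<in> {n. fx M a n \<noteq> gzero M n}"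
    then have "a (n - 1) \<noteq> gzero M (n - 1)"
      using x_zero[of "n - 1"] by (auto simp: fx_def)
    then show "n \<in> (\<lambda>n. n + 1) ` {n. a n \<noteq> gzero M n}"
      by (intro image_eqI[of _ _ "n - 1"]) auto
  qed
  then show ?thesis
    using assms fx_in[of a] elems_subset_comp_funs
    by (auto simp: elems_def comp_funs_def intro: finite_subset)
qed

lemma act_elems:
  assumes "h \<in> elems M"
  shows "act M t h \<in> elems M"
proof -
  have fxpow_elems: "(fx M ^^ i) h \<in> elems M" for i
    using assms by (induction i) (simp_all add: fx_elems)
  have fsum_elems: "fsum M f k \<in> elems M" if "\<And>i. f i \<in> elems M" for f k
    using that by (induction k) (simp_all add: fzero_elems fadd_elems)
  show ?thesis
    unfolding act_def by (intro fsum_elems fsm_elems fxpow_elems)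
qed

end

primrec gx_iter :: "('r, 'm) gmod \<Rightarrow> nat \<Rightarrow> int \<Rightarrow> 'm \<Rightarrow> 'm" where
  "gx_iter M 0 n m = m"
| "gx_iter M (Suc j) n m = gx M (n + int j) (gx_iter M j n m)"

definition hom_elem :: "('r, 'm) gmod \<Rightarrow> int \<Rightarrow> 'm \<Rightarrow> int \<Rightarrow> 'm" where
  "hom_elem M n m = (\<lambda>k. if k = n then m else gzero M k)"

definition kills_torsion :: "('r, 'm) gmod \<Rightarrow> nat \<Rightarrow> bool" where
  "kills_torsion M e \<longleftrightarrow> (\<forall>h\<in>Gamma M. (fx M ^^ e) h = fzero M)"

lemma fxpow_apply: "(fx M ^^ j) h n = gx_iter M j (n - int j) (h (n - int j))"
proof (induction j arbitrary: n)
  case (Suc j)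
  have "(fx M ^^ Suc j) h n = gx M (n - 1) ((fx M ^^ j) h (n - 1))"
    by (simp add: fx_def)
  also have "\<dots> = gx M (n - 1) (gx_iter M j (n - 1 - int j) (h (n - 1 - int j)))"
    using Suc by simp
  also have "n - 1 - int j = n - int (Suc j)" by simp
  also have "n - 1 = n - int (Suc j) + int j" by simp
  finally show ?case by simp
qed simp

context graded_module
begin

lemma gx_iter_zero: "gx_iter M j n (gzero M n) = gzero M (n + int j)"
proof (induction j)
  case (Suc j)
  have eq: "n + int (Suc j) = n + int j + 1" by simp
  show ?case unfolding eq gx_iter.simps Suc by (rule x_zero)
qed simp

lemma fxpow_eq_fzero_iff:
  "(fx M ^^ j) h = fzero M \<longleftrightarrow> (\<forall>n. gx_iter M j n (h n) = gzero M (n + int j))"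
proof
  assume "(fx M ^^ j) h = fzero M"
  then show "\<forall>n. gx_iter M j n (h n) = gzero M (n + int j)"
    using fxpow_apply[where M = M and j = j and h = h and n = "n + int j" for n]
    by (simp add: fzero_def)
next
  assume "\<forall>n. gx_iter M j n (h n) = gzero M (n + int j)"
  then show "(fx M ^^ j) h = fzero M"
    by (simp add: fun_eq_iff fxpow_apply fzero_def)
qed

lemma hom_elem_elems:
  assumes "m \<in> gcomp M n"
  shows "hom_elem M n m \<in> elems M"
proof -
  have "{k. hom_elem M n m k \<noteq> gzero M k} \<subseteq> {n}"
    by (auto simp: hom_elem_def)
  with assms show ?thesis
    by (auto simp: elems_def hom_elem_def zero_in dest: finite_subset)
qed

lemma fxpow_hom_elem_eq_fzero_iff:
  "(fx M ^^ j) (hom_elem M n m) = fzero M \<longleftrightarrow> gx_iter M j n m = gzero M (n + int j)"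
  unfolding fxpow_eq_fzero_iff by (auto simp: hom_elem_def gx_iter_zero)

lemma fzero_Gamma: "fzero M \<in> Gamma M"
  unfolding Gamma_def using fzero_elems fx_fzero by (auto intro!: exI[of _ 1])

lemma zero_in_hom_part:
  assumes "fzero M \<in> S"
  shows "gzero M n \<in> hom_part M S n"
proof -
  have "(\<lambda>k. if k = n then gzero M n else gzero M k) = fzero M"
    by (simp add: fun_eq_iff fzero_def)
  with assms show ?thesis
    by (simp add: hom_part_def zero_in)
qed

lemma kills_torsion_mono:
  assumes "kills_torsion M e" "e \<le> e'"
  shows "kills_torsion M e'"
proof -
  have "(fx M ^^ e') h = (fx M ^^ (e' - e)) ((fx M ^^ e) h)" for h
    using assms(2) funpow_add[of "e' - e" e "fx M"] by simp
  then show ?thesis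
    using assms(1) by (simp add: kills_torsion_def fxpow_fzero)
qed

lemma HSL_le_enat_iff: "HSL M \<le> enat e \<longleftrightarrow> kills_torsion M e"
proof
  assume le: "HSL M \<le> enat e"
  then have ex: "\<exists>e. kills_torsion M e"
    by (auto simp: HSL_def kills_torsion_def split: if_splits)
  then have "(LEAST e. kills_torsion M e) \<le> e"
    using le by (simp add: HSL_def kills_torsion_def)
  then show "kills_torsion M e"
    using LeastI_ex[OF ex] kills_torsion_mono by blast
next
  assume "kills_torsion M e"
  then show "HSL M \<le> enat e"
    by (auto simp: HSL_def kills_torsion_def intro: Least_le)
qed

lemma x_torsion_free_iff: "x_torsion_free M \<longleftrightarrow> kills_torsion M 0"
  using fzero_Gamma by (auto simp: x_torsion_free_def kills_torsion_def)

lemma Gamma_eq_if_kills_torsion: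
  assumes "kills_torsion M e"
  shows "Gamma M = {h \<in> elems M. \<forall>n. gx_iter M (Suc e) n (h n) = gzero M (n + int (Suc e))}"
proof -
  have "Gamma M = {h \<in> elems M. (fx M ^^ Suc e) h = fzero M}"
    using kills_torsion_mono[OF assms, of "Suc e"] unfolding kills_torsion_def Gamma_def
    by (auto simp del: funpow.simps)
  then show ?thesis by (simp only: fxpow_eq_fzero_iff)
qed

lemma hom_part_Gamma_if_kills_torsion:
  assumes "kills_torsion M e"
  shows "hom_part M (Gamma M) n = {m \<in> gcomp M n. gx_iter M (Suc e) n m = gzero M (n + int (Suc e))}"
proof -
  have "hom_elem M n m \<in> Gamma M \<longleftrightarrow> gx_iter M (Suc e) n m = gzero M (n + int (Suc e))"
    if "m \<in> gcomp M n" for m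
    using hom_elem_elems[OF that] fxpow_hom_elem_eq_fzero_iff[of "Suc e" n m]
    unfolding Gamma_eq_if_kills_torsion[OF assms] fxpow_eq_fzero_iff by blast
  then show ?thesis
    unfolding hom_part_def hom_elem_def by blast
qed

end

section \<open>Graded annihilators\<close>

lemma coeff_skmul:
  assumes "p > 0"
  shows "coeff (skmul p a b) n = (\<Sum>i\<le>n. coeff a i * coeff b (n - i) ^ (p ^ i))"
proof (cases "n < degree a + degree b + 1")
  case True
  then show ?thesis by (simp add: skmul_def nth_default_def del: upt_Suc)
next
  case False
  have "coeff a i * coeff b (n - i) ^ (p ^ i) = 0" if "i \<le> n" for i
    using False assms by (cases "i \<le> degree a") (simp_all add: coeff_eq_0 power_0_left)
  then show ?thesis
    using False by (simp add: skmul_def nth_default_def)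
qed

context
  fixes p :: nat
  assumes prime_p: "prime p" and CHAR_p: "CHAR('r::comm_ring_1) = p"
begin

text \<open>\<open>skmul\<close> is defined by a formula, so right distributivity is not automatic: it is the
  Frobenius identity \<open>(a + b)^(p^i) = a^(p^i) + b^(p^i)\<close>, the one place where the characteristic
  enters.\<close>

lemma skmul_add_right: "skmul p t (a + b) = skmul p t a + skmul p (t::'r poly) b"
proof -
  have "(x + y) ^ (p ^ i) = x ^ (p ^ i) + y ^ (p ^ i)" for x y :: 'r and i
    by (rule freshmans_dream') (use prime_p CHAR_p in simp_all)
  then show ?thesis
    using prime_gt_0_nat[OF prime_p]
    by (simp add: poly_eq_iff coeff_skmul distrib_left sum.distrib)
qed

lemma skmul_add_left: "skmul p (a + b) t = skmul p a t + skmul p (b::'r poly) t"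
  using prime_gt_0_nat[OF prime_p]
  by (simp add: poly_eq_iff coeff_skmul distrib_right sum.distrib)

lemma graded_ideal_zero: "graded_ideal p {0::'r poly}"
  using prime_gt_0_nat[OF prime_p]
  by (simp add: graded_ideal_def poly_eq_iff coeff_skmul power_0_left)

lemma graded_ideal_set_plus:
  assumes "graded_ideal p I" "graded_ideal p (J::'r poly set)"
  shows "graded_ideal p {a + b | a b. a \<in> I \<and> b \<in> J}"
  using assms unfolding graded_ideal_def
proof (elim conjE, intro conjI ballI allI)
  let ?S = "{a + b | a b. a \<in> I \<and> b \<in> J}"
  assume I: "0 \<in> I" "\<forall>a\<in>I. \<forall>b\<in>I. a + b \<in> I" "\<forall>a\<in>I. - a \<in> I"
      "\<forall>a\<in>I. \<forall>t. skmul p t a \<in> I \<and> skmul p a t \<in> I" "\<forall>a\<in>I. \<forall>n. monom (coeff a n) n \<in> I"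
    and J: "0 \<in> J" "\<forall>a\<in>J. \<forall>b\<in>J. a + b \<in> J" "\<forall>a\<in>J. - a \<in> J"
      "\<forall>a\<in>J. \<forall>t. skmul p t a \<in> J \<and> skmul p a t \<in> J" "\<forall>a\<in>J. \<forall>n. monom (coeff a n) n \<in> J"
  show "0 \<in> ?S"
    using I(1) J(1) by force
  fix x assume "x \<in> ?S"
  then obtain a b where x: "x = a + b" "a \<in> I" "b \<in> J" by blast
  have "- x = - a + - b" using x by simp
  then show "- x \<in> ?S"
    using x I(3) J(3) by blast
  fix t
  have "skmul p t x = skmul p t a + skmul p t b" "skmul p x t = skmul p a t + skmul p b t"
    using x by (simp_all add: skmul_add_right skmul_add_left)
  then show "skmul p t x \<in> ?S" "skmul p x t \<in> ?S"
    using x I(4) J(4) by blast+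
  fix n
  have "monom (coeff x n) n = monom (coeff a n) n + monom (coeff b n) n"
    using x by (simp add: add_monom)
  then show "monom (coeff x n) n \<in> ?S"
    using x I(5) J(5) by blast
  fix y assume "y \<in> ?S"
  then obtain c d where y: "y = c + d" "c \<in> I" "d \<in> J" by blast
  have "x + y = (a + c) + (b + d)" using x y by (simp add: ac_simps)
  then show "x + y \<in> ?S"
    using x y I(2) J(2) by blast
qed

end

lemma graded_ideal_Inter: "(\<And>l. graded_ideal p (B l)) \<Longrightarrow> graded_ideal p (\<Inter>l. B l)"
  by (simp add: graded_ideal_def)

definition annihilates :: "('r::comm_ring_1, 'm) gmod \<Rightarrow> (int \<Rightarrow> 'm) set \<Rightarrow> 'r poly set \<Rightarrow> bool" where
  "annihilates M N I \<longleftrightarrow> (\<forall>t\<in>I. \<forall>h\<in>N. act M t h = fzero M)"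

lemma annihilates_mono: "annihilates M N I \<Longrightarrow> J \<subseteq> I \<Longrightarrow> N' \<subseteq> N \<Longrightarrow> annihilates M N' J"
  by (auto simp: annihilates_def)

lemma grann_eqI:
  assumes "graded_ideal p G" "annihilates M N G"
    and "\<And>I. graded_ideal p I \<Longrightarrow> annihilates M N I \<Longrightarrow> I \<subseteq> G"
  shows "grann p M N = G"
  unfolding grann_def using assms by (intro Greatest_equality) (auto simp: annihilates_def)

locale frobenius_module = graded_module p M for p and M :: "('r::comm_ring_1, 'm) gmod" +
  assumes prime_p: "prime p" and CHAR_p: "CHAR('r) = p"
begin

text \<open>The graded annihilating ideals are closed under sums, so their union is the greatest one.\<close>

lemma grann_eq_Union:
  assumes "N \<subseteq> comp_funs M"
  shows "grann p M N = \<Union>{I. graded_ideal p I \<and> annihilates M N I}"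
    and "graded_ideal p (grann p M N)"
proof -
  let ?U = "\<Union>{I. graded_ideal p I \<and> annihilates M N I}"
  have sum_in: "a + b \<in> ?U" if a: "a \<in> ?U" and b: "b \<in> ?U" for a b
  proof -
    obtain I J where IJ: "graded_ideal p I" "annihilates M N I" "a \<in> I"
      "graded_ideal p J" "annihilates M N J" "b \<in> J"
      using a b by blast
    let ?K = "{a + b | a b. a \<in> I \<and> b \<in> J}"
    have "act M (a' + b') h = fzero M" if "a' \<in> I" "b' \<in> J" "h \<in> N" for a' b' h
      using that IJ assms act_add_left[of h a' b'] fzero_fadd_fzero
      by (auto simp: annihilates_def)
    then have "annihilates M N ?K"
      unfolding annihilates_def by blast
    moreover have "graded_ideal p ?K"
      using graded_ideal_set_plus[OF prime_p CHAR_p] IJ by blast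
    ultimately show ?thesis using IJ by blast
  qed
  have "0 \<in> ?U"
    using graded_ideal_zero[OF prime_p CHAR_p] act_zero_left assms
    by (auto simp: annihilates_def)
  moreover have "\<forall>a\<in>?U. - a \<in> ?U"
    and "\<forall>a\<in>?U. \<forall>t. skmul p t a \<in> ?U \<and> skmul p a t \<in> ?U"
    and "\<forall>a\<in>?U. \<forall>n. monom (coeff a n) n \<in> ?U"
    unfolding graded_ideal_def by blast+
  ultimately have "graded_ideal p ?U"
    using sum_in unfolding graded_ideal_def[of p ?U] by blast
  moreover have "annihilates M N ?U"
    by (auto simp: annihilates_def)
  ultimately have "grann p M N = ?U"
    by (intro grann_eqI) blast+
  then show "grann p M N = ?U" "graded_ideal p (grann p M N)"
    using \<open>graded_ideal p ?U\<close> by simp_all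
qed

lemma grann_annihilates: "N \<subseteq> comp_funs M \<Longrightarrow> annihilates M N (grann p M N)"
  by (auto simp: grann_eq_Union(1) annihilates_def)

lemma grann_greatest:
  "N \<subseteq> comp_funs M \<Longrightarrow> graded_ideal p I \<Longrightarrow> annihilates M N I \<Longrightarrow> I \<subseteq> grann p M N"
  by (auto simp: grann_eq_Union(1))

end

lemma submodD:
  assumes "submod M N"
  shows "N \<subseteq> elems M" "fzero M \<in> N" "\<And>h k. h \<in> N \<Longrightarrow> k \<in> N \<Longrightarrow> fadd M h k \<in> N"
    "\<And>t h. h \<in> N \<Longrightarrow> act M t h \<in> N"
  using assms unfolding submod_def by blast+

lemma submod_subset_comp_funs: "submod M N \<Longrightarrow> N \<subseteq> comp_funs M"
  using submodD(1) elems_subset_comp_funs by blast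

inductive_set submod_sum :: "('r::comm_ring_1, 'm) gmod \<Rightarrow> ('l \<Rightarrow> (int \<Rightarrow> 'm) set) \<Rightarrow> (int \<Rightarrow> 'm) set"
  for M NN where
  zero: "fzero M \<in> submod_sum M NN"
| summand: "h \<in> NN l \<Longrightarrow> h \<in> submod_sum M NN"
| add: "a \<in> submod_sum M NN \<Longrightarrow> b \<in> submod_sum M NN \<Longrightarrow> fadd M a b \<in> submod_sum M NN"

context frobenius_module
begin

lemma submod_submod_sum:
  assumes "\<And>l. submod M (NN l)"
  shows "submod M (submod_sum M NN)"
proof -
  have elems: "h \<in> elems M" if "h \<in> submod_sum M NN" for h
    using that
  proof induction
    case (summand h l)
    then show ?case using submodD(1)[OF assms] by blast
  next
    case zero
    show ?case by (rule fzero_elems)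
  next
    case (add a b)
    show ?case by (rule fadd_elems[OF add.IH])
  qed
  have "act M t h \<in> submod_sum M NN" if "h \<in> submod_sum M NN" for h t
    using that
  proof induction
    case zero
    show ?case unfolding act_fzero by (rule submod_sum.zero)
  next
    case (summand h l)
    show ?case using submodD(4)[OF assms summand] by (rule submod_sum.summand)
  next
    case (add a b)
    have "a \<in> comp_funs M" "b \<in> comp_funs M"
      using elems[OF add.hyps(1)] elems[OF add.hyps(2)] elems_subset_comp_funs by blast+
    with add.IH show ?case
      by (simp only: act_fadd submod_sum.add)
  qed
  then show ?thesis
    unfolding submod_def using elems submod_sum.zero submod_sum.add by blast
qed

lemma grann_submod_sum:
  assumes "\<And>l. submod M (NN l)"
  shows "grann p M (submod_sum M NN) = (\<Inter>l. grann p M (NN l))"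
proof (rule grann_eqI)
  have comp_funs: "NN l \<subseteq> comp_funs M" for l
    by (rule submod_subset_comp_funs[OF assms])
  show "graded_ideal p (\<Inter>l. grann p M (NN l))"
    by (rule graded_ideal_Inter, rule grann_eq_Union(2)[OF comp_funs])
  show "annihilates M (submod_sum M NN) (\<Inter>l. grann p M (NN l))"
    unfolding annihilates_def
  proof (intro ballI)
    fix t h assume t: "t \<in> (\<Inter>l. grann p M (NN l))" and h: "h \<in> submod_sum M NN"
    from h show "act M t h = fzero M"
    proof induction
      case (summand h l)
      have "t \<in> grann p M (NN l)" using t by blast
      with summand show ?case
        using grann_annihilates[OF comp_funs] unfolding annihilates_def by blast
    next
      case (add a b)
      have "submod_sum M NN \<subseteq> comp_funs M"
        by (rule submod_subset_comp_funs[OF submod_submod_sum[OF assms]])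
      then have "act M t (fadd M a b) = fadd M (act M t a) (act M t b)"
        using add.hyps by (intro act_fadd) blast+
      then show ?case by (simp only: add.IH fzero_fadd_fzero)
    qed (rule act_fzero)
  qed
  fix I assume I: "graded_ideal p I" "annihilates M (submod_sum M NN) I"
  have "NN l \<subseteq> submod_sum M NN" for l
    by (blast intro: submod_sum.summand)
  then have "I \<subseteq> grann p M (NN l)" for l
    by (intro grann_greatest[OF comp_funs I(1)] annihilates_mono[OF I(2) order_refl])
  then show "I \<subseteq> (\<Inter>l. grann p M (NN l))" by blast
qed

lemma Gset_Inter_closed:
  assumes "\<forall>l::'l. B l \<in> Gset p M"
  shows "(\<Inter>l. B l) \<in> Gset p M"
proof -
  have "\<forall>l. \<exists>N. submod M N \<and> B l = grann p M N"
    using assms unfolding Gset_def by blast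
  then obtain NN :: "'l \<Rightarrow> _" where NN: "\<And>l. submod M (NN l)" and B: "\<And>l. B l = grann p M (NN l)"
    by metis
  have "submod M (submod_sum M NN)" "(\<Inter>l. B l) = grann p M (submod_sum M NN)"
    by (simp_all add: B submod_submod_sum[OF NN] grann_submod_sum[OF NN])
  then show ?thesis
    unfolding Gset_def by blast
qed

end

section \<open>Products of graded modules\<close>

lemma gprod_simps [simp]:
  "gcomp (gprod H) n = {v. \<forall>l. v l \<in> gcomp (H l) n}"
  "gzero (gprod H) n = (\<lambda>l. gzero (H l) n)"
  "gadd (gprod H) n v w = (\<lambda>l. gadd (H l) n (v l) (w l))"
  "gneg (gprod H) n v = (\<lambda>l. gneg (H l) n (v l))"
  "gsmult (gprod H) n r v = (\<lambda>l. gsmult (H l) n r (v l))"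
  "gx (gprod H) n v = (\<lambda>l. gx (H l) n (v l))"
  by (simp_all add: gprod_def)

lemma is_gmod_gprod:
  assumes "\<And>l. is_gmod p (H l)"
  shows "is_gmod p (gprod H)"
proof -
  have H: "graded_module p (H l)" for l
    by (rule graded_module.intro[OF assms])
  show ?thesis
    using graded_module.zero_in[OF H] graded_module.add_in[OF H] graded_module.neg_in[OF H]
      graded_module.smult_in[OF H] graded_module.x_in[OF H] graded_module.add_assoc[OF H]
      graded_module.add_commute[OF H] graded_module.zero_add[OF H] graded_module.neg_add[OF H]
      graded_module.smult_add[OF H] graded_module.add_smult[OF H] graded_module.mult_smult[OF H]
      graded_module.one_smult[OF H] graded_module.x_add[OF H] graded_module.x_smult[OF H]
    unfolding is_gmod_def Let_def gprod_simps by (simp add: fun_eq_iff)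
qed

definition coord :: "(int \<Rightarrow> 'l \<Rightarrow> 'm) \<Rightarrow> 'l \<Rightarrow> int \<Rightarrow> 'm" where
  "coord h l = (\<lambda>n. h n l)"

definition prod_inj :: "('l \<Rightarrow> ('r, 'm) gmod) \<Rightarrow> 'l \<Rightarrow> (int \<Rightarrow> 'm) \<Rightarrow> int \<Rightarrow> 'l \<Rightarrow> 'm" where
  "prod_inj H l k = (\<lambda>n l'. if l' = l then k n else gzero (H l') n)"

lemma coord_eq_iff: "h = k \<longleftrightarrow> (\<forall>l. coord h l = coord k l)"
  by (auto simp: coord_def fun_eq_iff)

lemma coord_fzero [simp]: "coord (fzero (gprod H)) l = fzero (H l)"
  and coord_fadd [simp]: "coord (fadd (gprod H) a b) l = fadd (H l) (coord a l) (coord b l)"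
  and coord_fsm [simp]: "coord (fsm (gprod H) r a) l = fsm (H l) r (coord a l)"
  and coord_fx [simp]: "coord (fx (gprod H) a) l = fx (H l) (coord a l)"
  by (simp_all add: coord_def fzero_def fadd_def fsm_def fx_def)

lemma coord_fxpow [simp]: "coord ((fx (gprod H) ^^ i) a) l = (fx (H l) ^^ i) (coord a l)"
  by (induction i) simp_all

lemma coord_act [simp]: "coord (act (gprod H) t h) l = act (H l) t (coord h l)"
proof -
  have "coord (fsum (gprod H) f k) l = fsum (H l) (\<lambda>i. coord (f i) l) k" for f k
    by (induction k) simp_all
  then show ?thesis by (simp add: act_def)
qed

lemma gx_iter_gprod: "gx_iter (gprod H) j n v = (\<lambda>l. gx_iter (H l) j n (v l))"
  by (induction j) simp_all

lemma coord_prod_inj: "coord (prod_inj H l k) l' = (if l' = l then k else fzero (H l'))"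
  by (simp add: coord_def prod_inj_def fzero_def fun_eq_iff)

lemma coord_elems: "h \<in> elems (gprod H) \<Longrightarrow> coord h l \<in> elems (H l)"
  by (auto simp: elems_def coord_def elim!: rev_finite_subset)

lemma gquot_simps [simp]:
  "gcomp (gquot M S) n = coset M S n ` gcomp M n"
  "gadd (gquot M S) n A B = {gadd M n a b | a b. a \<in> A \<and> b \<in> B}"
  "gsmult (gquot M S) n r A = {gadd M n (gsmult M n r a) s | a s. a \<in> A \<and> s \<in> hom_part M S n}"
  "gx (gquot M S) n A = {gadd M (n + 1) (gx M n a) s | a s. a \<in> A \<and> s \<in> hom_part M S (n + 1)}"
  by (simp_all add: gquot_def)

lemma image_coord_Collect:
  "(\<lambda>v. v l) ` {(\<lambda>l. F l (a l) (s l)) | a s. a \<in> A \<and> s \<in> S}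
    = {F l a s | a s. a \<in> (\<lambda>v. v l) ` A \<and> s \<in> (\<lambda>v. v l) ` S}"
proof (intro equalityI subsetI)
  fix y assume "y \<in> {F l a s | a s. a \<in> (\<lambda>v. v l) ` A \<and> s \<in> (\<lambda>v. v l) ` S}"
  then obtain a s where "y = F l (a l) (s l)" "a \<in> A" "s \<in> S" by blast
  then show "y \<in> (\<lambda>v. v l) ` {(\<lambda>l. F l (a l) (s l)) | a s. a \<in> A \<and> s \<in> S}"
    by (intro image_eqI[where x = "\<lambda>l. F l (a l) (s l)"]) auto
qed auto

lemma enat_eqI_le_enat:
  fixes x y :: enat
  assumes "\<And>e. x \<le> enat e \<longleftrightarrow> y \<le> enat e"
  shows "x = y"
proof (rule antisym)
  show "x \<le> y" using assms[of "the_enat y"] by (cases y) simp_all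
  show "y \<le> x" using assms[of "the_enat x"] by (cases x) simp_all
qed

locale frobenius_family =
  fixes p :: nat and H :: "'l \<Rightarrow> ('r::comm_ring_1, 'm) gmod"
  assumes prime_p: "prime p" and CHAR_p: "CHAR('r) = p"
    and is_gmod_component: "\<And>l. is_gmod p (H l)"
begin

lemma graded_component: "graded_module p (H l)"
  by (rule graded_module.intro[OF is_gmod_component])

lemma frobenius_component: "frobenius_module p (H l)"
  by (intro frobenius_module.intro frobenius_module_axioms.intro graded_component prime_p CHAR_p)

sublocale prod: frobenius_module p "gprod H"
  by (intro frobenius_module.intro frobenius_module_axioms.intro graded_module.intro
      is_gmod_gprod is_gmod_component prime_p CHAR_p)

lemma prod_inj_elems:
  assumes "k \<in> elems (H l)"
  shows "prod_inj H l k \<in> elems (gprod H)"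
proof -
  have "{n. prod_inj H l k n \<noteq> gzero (gprod H) n} \<subseteq> {n. k n \<noteq> gzero (H l) n}"
    by (auto simp: prod_inj_def fun_eq_iff)
  moreover have "prod_inj H l k n \<in> gcomp (gprod H) n" for n
    using assms graded_module.zero_in[OF graded_component]
    by (auto simp: prod_inj_def elems_def)
  ultimately show ?thesis
    using assms by (auto simp: elems_def elim!: rev_finite_subset)
qed

lemma fxpow_prod_inj: "(fx (gprod H) ^^ j) (prod_inj H l k) = prod_inj H l ((fx (H l) ^^ j) k)"
  unfolding coord_eq_iff
  by (simp add: coord_prod_inj graded_module.fxpow_fzero[OF graded_component])

lemma submod_coord_image:
  assumes N: "submod (gprod H) N"
  shows "submod (H l) ((\<lambda>h. coord h l) ` N)"
  unfolding submod_def
proof (intro conjI ballI allI)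
  show "(\<lambda>h. coord h l) ` N \<subseteq> elems (H l)"
    using submodD(1)[OF N] coord_elems[of _ H l] by blast
  show "fzero (H l) \<in> (\<lambda>h. coord h l) ` N"
    using submodD(2)[OF N] by (intro image_eqI[where x = "fzero (gprod H)"]) simp_all
next
  fix h k assume "h \<in> (\<lambda>h. coord h l) ` N" "k \<in> (\<lambda>h. coord h l) ` N"
  then obtain h' k' where hk: "h' \<in> N" "k' \<in> N" "h = coord h' l" "k = coord k' l" by blast
  then have "fadd (H l) h k = coord (fadd (gprod H) h' k') l" by simp
  then show "fadd (H l) h k \<in> (\<lambda>h. coord h l) ` N"
    using submodD(3)[OF N hk(1,2)] by blast
next
  fix t h assume "h \<in> (\<lambda>h. coord h l) ` N"
  then obtain h' where h: "h' \<in> N" "h = coord h' l" by blast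
  then have "act (H l) t h = coord (act (gprod H) t h') l" by simp
  then show "act (H l) t h \<in> (\<lambda>h. coord h l) ` N"
    using submodD(4)[OF N h(1)] by blast
qed

lemma annihilates_gprod_iff:
  "annihilates (gprod H) N I \<longleftrightarrow> (\<forall>l. annihilates (H l) ((\<lambda>h. coord h l) ` N) I)"
  unfolding annihilates_def by (subst coord_eq_iff) auto

lemma grann_gprod:
  assumes N: "submod (gprod H) N"
  shows "grann p (gprod H) N = (\<Inter>l. grann p (H l) ((\<lambda>h. coord h l) ` N))"
proof (rule grann_eqI)
  have comp_funs: "(\<lambda>h. coord h l) ` N \<subseteq> comp_funs (H l)" for l
    by (rule submod_subset_comp_funs[OF submod_coord_image[OF N]])
  show "graded_ideal p (\<Inter>l. grann p (H l) ((\<lambda>h. coord h l) ` N))"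
    by (rule graded_ideal_Inter, rule frobenius_module.grann_eq_Union(2)[OF frobenius_component comp_funs])
  show "annihilates (gprod H) N (\<Inter>l. grann p (H l) ((\<lambda>h. coord h l) ` N))"
    unfolding annihilates_gprod_iff
  proof
    fix l
    show "annihilates (H l) ((\<lambda>h. coord h l) ` N) (\<Inter>l. grann p (H l) ((\<lambda>h. coord h l) ` N))"
      using frobenius_module.grann_annihilates[OF frobenius_component comp_funs, of l]
      by (rule annihilates_mono) auto
  qed
  fix I assume I: "graded_ideal p I" "annihilates (gprod H) N I"
  show "I \<subseteq> (\<Inter>l. grann p (H l) ((\<lambda>h. coord h l) ` N))"
    using I(2) unfolding annihilates_gprod_iff
    by (intro INT_greatest frobenius_module.grann_greatest[OF frobenius_component comp_funs I(1)]) blast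
qed

lemma submod_coord_preimage:
  assumes NN: "\<And>l. submod (H l) (NN l)"
  defines "N \<equiv> {h \<in> elems (gprod H). \<forall>l. coord h l \<in> NN l}"
  shows "submod (gprod H) N" and "(\<lambda>h. coord h l) ` N = NN l"
proof -
  show "submod (gprod H) N"
    unfolding submod_def N_def
    using prod.fzero_elems prod.fadd_elems prod.act_elems submodD[OF NN] by simp
  show "(\<lambda>h. coord h l) ` N = NN l"
  proof
    show "(\<lambda>h. coord h l) ` N \<subseteq> NN l" by (auto simp: N_def)
    show "NN l \<subseteq> (\<lambda>h. coord h l) ` N"
    proof
      fix k assume k: "k \<in> NN l"
      then have "prod_inj H l k \<in> N"
        using prod_inj_elems submodD(1,2)[OF NN] by (auto simp: N_def coord_prod_inj)
      moreover have "coord (prod_inj H l k) l = k" by (simp add: coord_prod_inj)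
      ultimately show "k \<in> (\<lambda>h. coord h l) ` N" by (metis imageI)
    qed
  qed
qed

lemma Gset_gprod: "Gset p (gprod H) = {\<Inter>l. B l | B. \<forall>l. B l \<in> Gset p (H l)}"
proof (intro equalityI subsetI)
  fix X assume "X \<in> Gset p (gprod H)"
  then obtain N where N: "submod (gprod H) N" and X: "X = grann p (gprod H) N"
    unfolding Gset_def by blast
  have "grann p (H l) ((\<lambda>h. coord h l) ` N) \<in> Gset p (H l)" for l
    unfolding Gset_def using submod_coord_image[OF N] by blast
  then show "X \<in> {\<Inter>l. B l | B. \<forall>l. B l \<in> Gset p (H l)}"
    unfolding X grann_gprod[OF N] by blast
next
  fix X assume "X \<in> {\<Inter>l. B l | B. \<forall>l. B l \<in> Gset p (H l)}"
  then obtain B where X: "X = (\<Inter>l. B l)" and "\<forall>l. B l \<in> Gset p (H l)"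
    by blast
  then have "\<forall>l. \<exists>N. submod (H l) N \<and> B l = grann p (H l) N"
    unfolding Gset_def by blast
  from choice[OF this] obtain NN where "\<forall>l. submod (H l) (NN l) \<and> B l = grann p (H l) (NN l)"
    by blast
  then have NN: "\<And>l. submod (H l) (NN l)" and B: "\<And>l. B l = grann p (H l) (NN l)"
    by blast+
  let ?N = "{h \<in> elems (gprod H). \<forall>l. coord h l \<in> NN l}"
  have "X = grann p (gprod H) ?N"
    by (simp add: X B grann_gprod submod_coord_preimage[OF NN])
  then show "X \<in> Gset p (gprod H)"
    unfolding Gset_def using submod_coord_preimage(1)[OF NN] by blast
qed

lemma Gset_gprod_const:
  assumes "\<forall>l. Gset p (H l) = G"
  shows "Gset p (gprod H) = G"
proof -
  have G: "G = Gset p (H l)" for l using assms by simp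
  have "{\<Inter>l::'l. B l | B. \<forall>l. B l \<in> G} = G"
  proof (intro equalityI subsetI)
    fix X assume "X \<in> {\<Inter>l::'l. B l | B. \<forall>l. B l \<in> G}"
    then obtain B where "X = (\<Inter>l. B l)" "\<forall>l::'l. B l \<in> Gset p (H undefined)"
      using G by blast
    then show "X \<in> G"
      using frobenius_module.Gset_Inter_closed[OF frobenius_component] G by blast
  next
    fix X assume "X \<in> G"
    then show "X \<in> {\<Inter>l::'l. B l | B. \<forall>l. B l \<in> G}"
      by (intro CollectI exI[of _ "\<lambda>l. X"]) simp
  qed
  then show ?thesis
    using Gset_gprod assms by simp
qed

lemma coord_Gamma: "h \<in> Gamma (gprod H) \<Longrightarrow> coord h l \<in> Gamma (H l)"
proof -
  assume "h \<in> Gamma (gprod H)"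
  then obtain j where "j \<ge> 1" "(fx (gprod H) ^^ j) h = fzero (gprod H)" "h \<in> elems (gprod H)"
    unfolding Gamma_def by blast
  then show ?thesis
    unfolding Gamma_def using coord_elems
    by (auto dest!: arg_cong[where f = "\<lambda>h. coord h l"])
qed

lemma prod_inj_Gamma: "k \<in> Gamma (H l) \<Longrightarrow> prod_inj H l k \<in> Gamma (gprod H)"
proof -
  assume "k \<in> Gamma (H l)"
  then obtain j where "j \<ge> 1" "(fx (H l) ^^ j) k = fzero (H l)" "k \<in> elems (H l)"
    unfolding Gamma_def by blast
  moreover have "prod_inj H l (fzero (H l)) = fzero (gprod H)"
    by (simp add: prod_inj_def fzero_def fun_eq_iff)
  ultimately show ?thesis
    unfolding Gamma_def using prod_inj_elems by (auto simp: fxpow_prod_inj)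
qed

lemma kills_torsion_gprod_iff: "kills_torsion (gprod H) e \<longleftrightarrow> (\<forall>l. kills_torsion (H l) e)"
proof
  assume "kills_torsion (gprod H) e"
  then have "coord ((fx (gprod H) ^^ e) (prod_inj H l k)) l = fzero (H l)" if "k \<in> Gamma (H l)" for l k
    using prod_inj_Gamma[OF that] unfolding kills_torsion_def by simp
  then show "\<forall>l. kills_torsion (H l) e"
    unfolding kills_torsion_def by (simp add: coord_prod_inj)
next
  assume "\<forall>l. kills_torsion (H l) e"
  then show "kills_torsion (gprod H) e"
    unfolding kills_torsion_def coord_eq_iff[of _ "fzero (gprod H)"] using coord_Gamma by simp
qed

lemma HSL_gprod: "HSL (gprod H) = (SUP l. HSL (H l))"
proof -
  have "HSL (gprod H) \<le> enat e \<longleftrightarrow> (SUP l. HSL (H l)) \<le> enat e" for e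
    by (simp add: prod.HSL_le_enat_iff graded_module.HSL_le_enat_iff[OF graded_component]
        kills_torsion_gprod_iff SUP_le_iff)
  then show ?thesis
    by (rule enat_eqI_le_enat)
qed

lemma x_torsion_free_gprod_iff: "x_torsion_free (gprod H) \<longleftrightarrow> (\<forall>l. x_torsion_free (H l))"
  by (simp add: prod.x_torsion_free_iff graded_module.x_torsion_free_iff[OF graded_component]
      kills_torsion_gprod_iff)

context
  fixes e :: nat
  assumes kills: "kills_torsion (gprod H) e"
begin

lemma kills_torsion_component: "kills_torsion (H l) e"
  using kills kills_torsion_gprod_iff by blast

lemma hom_part_Gamma_gprod:
  "hom_part (gprod H) (Gamma (gprod H)) n = {v. \<forall>l. v l \<in> hom_part (H l) (Gamma (H l)) n}"
  unfolding prod.hom_part_Gamma_if_kills_torsion[OF kills]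
    graded_module.hom_part_Gamma_if_kills_torsion[OF graded_component kills_torsion_component]
  by (auto simp: gx_iter_gprod fun_eq_iff)

lemma coord_image_hom_part_Gamma:
  "(\<lambda>s. s l) ` hom_part (gprod H) (Gamma (gprod H)) n = hom_part (H l) (Gamma (H l)) n"
proof (intro equalityI subsetI)
  fix m assume m: "m \<in> hom_part (H l) (Gamma (H l)) n"
  have "gzero (H l') n \<in> hom_part (H l') (Gamma (H l')) n" for l'
    using graded_module.zero_in_hom_part[OF graded_component graded_module.fzero_Gamma[OF graded_component]] .
  then have "(\<lambda>l'. if l' = l then m else gzero (H l') n) \<in> hom_part (gprod H) (Gamma (gprod H)) n"
    using m by (simp add: hom_part_Gamma_gprod)
  then show "m \<in> (\<lambda>s. s l) ` hom_part (gprod H) (Gamma (gprod H)) n"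
    by (rule rev_image_eqI) simp
qed (auto simp: hom_part_Gamma_gprod)

lemma Gamma_gprod: "Gamma (gprod H) = elems (gprod (\<lambda>l. gsub (H l) (Gamma (H l))))"
  unfolding prod.Gamma_eq_if_kills_torsion[OF kills] elems_def gsub_def
    graded_module.hom_part_Gamma_if_kills_torsion[OF graded_component kills_torsion_component]
  by (auto simp: gx_iter_gprod fun_eq_iff)

lemma coord_image_coset:
  "(\<lambda>a. a l) ` coset (gprod H) (Gamma (gprod H)) n v = coset (H l) (Gamma (H l)) n (v l)"
  unfolding coset_def coord_image_hom_part_Gamma[symmetric] by auto

lemma coset_gprod:
  "coset (gprod H) (Gamma (gprod H)) n v = {u. \<forall>l. u l \<in> coset (H l) (Gamma (H l)) n (v l)}"
proof (intro equalityI subsetI)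
  fix u assume "u \<in> coset (gprod H) (Gamma (gprod H)) n v"
  then show "u \<in> {u. \<forall>l. u l \<in> coset (H l) (Gamma (H l)) n (v l)}"
    using coord_image_coset by blast
next
  fix u assume "u \<in> {u. \<forall>l. u l \<in> coset (H l) (Gamma (H l)) n (v l)}"
  then have "\<forall>l. \<exists>s. s \<in> hom_part (H l) (Gamma (H l)) n \<and> u l = gadd (H l) n (v l) s"
    unfolding coset_def by blast
  from choice[OF this] obtain s
    where "\<forall>l. s l \<in> hom_part (H l) (Gamma (H l)) n \<and> u l = gadd (H l) n (v l) (s l)" ..
  then show "u \<in> coset (gprod H) (Gamma (gprod H)) n v"
    unfolding coset_def hom_part_Gamma_gprod by (auto simp: fun_eq_iff)
qed

lemma bij_betw_coord_images:
  "bij_betw (\<lambda>A l. (\<lambda>a. a l) ` A) (gcomp (gquot (gprod H) (Gamma (gprod H))) n)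
     (gcomp (gprod (\<lambda>l. gquot (H l) (Gamma (H l)))) n)"
proof -
  let ?phi = "\<lambda>A l. (\<lambda>a. a l) ` A"
  let ?co = "coset (gprod H) (Gamma (gprod H)) n"
  have image_co: "?phi (?co v) = (\<lambda>l. coset (H l) (Gamma (H l)) n (v l))" for v
    by (simp add: coord_image_coset)
  show ?thesis
    unfolding bij_betw_def
  proof
    show "inj_on ?phi (gcomp (gquot (gprod H) (Gamma (gprod H))) n)"
    proof (rule inj_onI)
      fix A B assume A: "A \<in> gcomp (gquot (gprod H) (Gamma (gprod H))) n"
        and B: "B \<in> gcomp (gquot (gprod H) (Gamma (gprod H))) n" and eq: "?phi A = ?phi B"
      from A B obtain v w where v: "A = ?co v" and w: "B = ?co w" by auto
      with eq have "coset (H l) (Gamma (H l)) n (v l) = coset (H l) (Gamma (H l)) n (w l)" for l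
        by (simp add: image_co fun_eq_iff)
      then show "A = B" unfolding v w coset_gprod by simp
    qed
    show "?phi ` gcomp (gquot (gprod H) (Gamma (gprod H))) n = gcomp (gprod (\<lambda>l. gquot (H l) (Gamma (H l)))) n"
    proof (intro equalityI subsetI)
      fix X assume "X \<in> ?phi ` gcomp (gquot (gprod H) (Gamma (gprod H))) n"
      then show "X \<in> gcomp (gprod (\<lambda>l. gquot (H l) (Gamma (H l)))) n"
        by (auto simp: coord_image_coset)
    next
      fix X assume "X \<in> gcomp (gprod (\<lambda>l. gquot (H l) (Gamma (H l)))) n"
      then have "\<forall>l. \<exists>w. w \<in> gcomp (H l) n \<and> X l = coset (H l) (Gamma (H l)) n w" by auto
      from choice[OF this] obtain v
        where v: "\<forall>l. v l \<in> gcomp (H l) n \<and> X l = coset (H l) (Gamma (H l)) n (v l)" ..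
      then have "X = ?phi (?co v)" by (simp add: image_co fun_eq_iff)
      moreover have "?co v \<in> gcomp (gquot (gprod H) (Gamma (gprod H))) n" using v by auto
      ultimately show "X \<in> ?phi ` gcomp (gquot (gprod H) (Gamma (gprod H))) n" by blast
    qed
  qed
qed

lemma coord_images_gadd:
  "(\<lambda>l. (\<lambda>a. a l) ` gadd (gquot (gprod H) (Gamma (gprod H))) n A B)
    = gadd (gprod (\<lambda>l. gquot (H l) (Gamma (H l)))) n (\<lambda>l. (\<lambda>a. a l) ` A) (\<lambda>l. (\<lambda>a. a l) ` B)"
  using image_coord_Collect[of l "\<lambda>l. gadd (H l) n" A B for l] by (simp add: fun_eq_iff)

lemma coord_images_gsmult:
  "(\<lambda>l. (\<lambda>a. a l) ` gsmult (gquot (gprod H) (Gamma (gprod H))) n r A)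
    = gsmult (gprod (\<lambda>l. gquot (H l) (Gamma (H l)))) n r (\<lambda>l. (\<lambda>a. a l) ` A)"
  using image_coord_Collect[of l "\<lambda>l x. gadd (H l) n (gsmult (H l) n r x)" A
      "hom_part (gprod H) (Gamma (gprod H)) n" for l]
  by (simp add: fun_eq_iff coord_image_hom_part_Gamma)

lemma coord_images_gx:
  "(\<lambda>l. (\<lambda>a. a l) ` gx (gquot (gprod H) (Gamma (gprod H))) n A)
    = gx (gprod (\<lambda>l. gquot (H l) (Gamma (H l)))) n (\<lambda>l. (\<lambda>a. a l) ` A)"
  using image_coord_Collect[of l "\<lambda>l x. gadd (H l) (n + 1) (gx (H l) n x)" A
      "hom_part (gprod H) (Gamma (gprod H)) (n + 1)" for l]
  by (simp add: fun_eq_iff coord_image_hom_part_Gamma)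

lemma giso_coord_images:
  "giso (gquot (gprod H) (Gamma (gprod H))) (gprod (\<lambda>l. gquot (H l) (Gamma (H l))))
     (\<lambda>n A l. (\<lambda>a. a l) ` A)"
  unfolding giso_def
  using bij_betw_coord_images coord_images_gadd coord_images_gsmult coord_images_gx by blast

end

end

theorem lemma2p3:
  fixes p :: nat and H :: "'l \<Rightarrow> ('r::comm_ring_1, 'm) gmod"
  assumes "noetherian TYPE('r)" and "prime p" and "CHAR('r) = p"
    and "\<And>l. is_gmod p (H l)"
  shows "Gset p (gprod H) = {\<Inter>l. B l | B. \<forall>l. B l \<in> Gset p (H l)}
    \<and> (\<forall>G'. (\<forall>I\<in>G'. graded_ideal p I) \<longrightarrow> (\<forall>l. Gset p (H l) = G') \<longrightarrow> Gset p (gprod H) = G')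
    \<and> HSL (gprod H) = (SUP l. HSL (H l))
    \<and> (x_torsion_free (gprod H) \<longleftrightarrow> (\<forall>l. x_torsion_free (H l)))
    \<and> (HSL (gprod H) \<noteq> \<infinity> \<longrightarrow>
           Gamma (gprod H) = elems (gprod (\<lambda>l. gsub (H l) (Gamma (H l))))
         \<and> (\<exists>\<phi>. giso (gquot (gprod H) (Gamma (gprod H)))
                      (gprod (\<lambda>l. gquot (H l) (Gamma (H l)))) \<phi>))"
proof -
  interpret frobenius_family p H
    using assms(2-4) by unfold_locales
  have kills: "\<exists>e. kills_torsion (gprod H) e" if finite: "HSL (gprod H) \<noteq> \<infinity>"
  proof -
    obtain e where "HSL (gprod H) \<le> enat e"
      using finite by (cases "HSL (gprod H)") auto
    then show ?thesis
      using prod.HSL_le_enat_iff by blast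
  qed
  have const: "\<forall>G'. (\<forall>I\<in>G'. graded_ideal p I) \<longrightarrow> (\<forall>l. Gset p (H l) = G') \<longrightarrow> Gset p (gprod H) = G'"
    using Gset_gprod_const by blast
  have Gamma_eq: "Gamma (gprod H) = elems (gprod (\<lambda>l. gsub (H l) (Gamma (H l))))"
    if "HSL (gprod H) \<noteq> \<infinity>"
    using kills[OF that] Gamma_gprod by blast
  have iso: "\<exists>\<phi>. giso (gquot (gprod H) (Gamma (gprod H))) (gprod (\<lambda>l. gquot (H l) (Gamma (H l)))) \<phi>"
    if "HSL (gprod H) \<noteq> \<infinity>"
    using kills[OF that] giso_coord_images by blast
  show ?thesis
    by (intro conjI impI Gset_gprod const HSL_gprod x_torsion_free_gprod_iff Gamma_eq iso)
qed

end
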